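(* Let $W$ be a finite set and $\mathtt{N}=\{N_1,\ldots,N_r\}$ a sequence of subsets of $W$ with $N_1\cup\cdots\cup N_r=W$. Put $M_i=N_i-(N_1\cup\cdots\cup N_{i-1})$, $\mathtt{M}=\{M_1,\ldots,M_r\}$, and $U=\widetilde{M}_2\cup\cdots\cup\widetilde{M}_r$. Then $$\mathbb{R}\mathcal{Z}_{K(\mathtt{M})}\cong S^{|M_1|}\times\cdots\times S^{|M_r|},\qquad\mathbb{R}\mathcal{Z}_{K(\mathtt{M})_U}\cong S^{|M_2|}\times\cdots\times S^{|M_r|}.$$
   Context: For a sequence $\mathtt{N}=\{N_1,\ldots,N_r\}$ of subsets of $W$ (repetitions allowed), choose distinct points $a_1,\ldots,a_r\notin W$, $\widetilde{N}_i=N_i\sqcup\{a_i\}$; $K(\mathtt{N})$ is the simplicial complex on $W\sqcup\{a_1,\ldots,a_r\}$ with minimal non-faces exactly $\widetilde{N}_1,\ldots,\widetilde{N}_r$. $K(\mathtt{M})$ uses the same points, $\widetilde{M}_i=M_i\sqcup\{a_i\}$. For a vertex subset $U$, $K_U=\{\sigma\in K\mid\sigma\subset U\}$ as a complex on vertex set $U$. For a simplicial complex $K$ on vertex set $V$, the real moment-angle complex is $\mathbb{R}\mathcal{Z}_K=\bigcup_{\sigma\in K}\prod_{v\in V}Y_v$ with $Y_v=CS^0$ (reduced cone on $S^0$, an interval) if $v\in\sigma$ and $Y_v=S^0$ otherwise. *)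

theory Defs
  imports "HOL-Analysis.Analysis"
begin

text \<open>Vertices of K(N): the points of W are tagged Inl w, the extra points a_i are Inr i.
  The sequence N_1,...,N_r is a function N :: nat => 'a set used on indices 1..r.\<close>

definition tilde :: "(nat \<Rightarrow> 'a set) \<Rightarrow> nat \<Rightarrow> ('a + nat) set" where
  "tilde N i = Inl ` N i \<union> {Inr i}"

definition KVerts :: "'a set \<Rightarrow> nat \<Rightarrow> ('a + nat) set" where
  "KVerts W r = Inl ` W \<union> Inr ` {1..r}"

text \<open>K(N): the simplicial complex on KVerts W r whose minimal non-faces are exactly
  the sets tilde N i, i = 1..r (faces = subsets containing no tilde N i).\<close>
definition KN :: "'a set \<Rightarrow> nat \<Rightarrow> (nat \<Rightarrow> 'a set) \<Rightarrow> ('a + nat) set set" where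
  "KN W r N = {\<sigma>. \<sigma> \<subseteq> KVerts W r \<and> (\<forall>i\<in>{1..r}. \<not> tilde N i \<subseteq> \<sigma>)}"

definition full_sub :: "'v set set \<Rightarrow> 'v set \<Rightarrow> 'v set set" where
  "full_sub K U = {\<sigma> \<in> K. \<sigma> \<subseteq> U}"

text \<open>Real moment-angle complex of K on vertex set V, as a subspace of [-1,1]^V:
  CS^0 = [-1,1], S^0 = {-1,1}.\<close>
definition RZ_set :: "'v set set \<Rightarrow> 'v set \<Rightarrow> ('v \<Rightarrow> real) set" where
  "RZ_set K V = (\<Union>\<sigma>\<in>K. PiE V (\<lambda>v. if v \<in> \<sigma> then {-1..1} else {-1, 1}))"

definition RZ :: "'v set set \<Rightarrow> 'v set \<Rightarrow> ('v \<Rightarrow> real) topology" where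
  "RZ K V = subtopology (product_topology (\<lambda>_. euclideanreal) V) (RZ_set K V)"

definition nsphere :: "nat \<Rightarrow> (nat \<Rightarrow> real) topology" where
  "nsphere n = subtopology (product_topology (\<lambda>_. euclideanreal) {..n})
      {x \<in> PiE {..n} (\<lambda>_. UNIV). (\<Sum>i\<le>n. (x i)\<^sup>2) = 1}"

end

theory Submission
  imports Defs
begin

text \<open>The sets \<open>M\<^sub>i\<close> are pairwise disjoint and cover \<open>W\<close>, so the minimal non-faces
  \<open>M\<^sub>i \<union> {a\<^sub>i}\<close> of \<open>K(M)\<close> partition its vertex set. For a complex whose minimal non-faces
  \<open>T\<^sub>i\<close> partition the vertices, a point of \<open>[-1,1]\<^sup>V\<close> lies in the real moment-angle complex iff
  for every \<open>i\<close> some coordinate in \<open>T\<^sub>i\<close> is \<open>\<plusminus>1\<close>; hence it is the product of the boundaries of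
  the cubes \<open>[-1,1]\<^bsup>T\<^sub>i\<^esup>\<close>, and radial projection identifies each such boundary with a sphere of
  dimension \<open>|T\<^sub>i| - 1\<close>. The full subcomplex on \<open>U\<close> is again of this form, with minimal
  non-faces \<open>M\<^sub>i \<union> {a\<^sub>i}\<close> for \<open>i \<ge> 2\<close>.\<close>

lemma homeomorphic_space_product_topology:
  assumes "\<And>i. i \<in> I \<Longrightarrow> X i homeomorphic_space Y i"
  shows "product_topology X I homeomorphic_space product_topology Y I"
proof -
  from assms obtain f g where fg: "\<And>i. i \<in> I \<Longrightarrow> homeomorphic_maps (X i) (Y i) (f i) (g i)"
    unfolding homeomorphic_space_def by metis
  then have cf: "\<And>i. i \<in> I \<Longrightarrow> continuous_map (X i) (Y i) (f i)"
    and cg: "\<And>i. i \<in> I \<Longrightarrow> continuous_map (Y i) (X i) (g i)"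
    by (auto simp: homeomorphic_maps_def)
  let ?F = "\<lambda>x. restrict (\<lambda>i. f i (x i)) I"
  let ?G = "\<lambda>y. restrict (\<lambda>i. g i (y i)) I"
  have "continuous_map (product_topology X I) (product_topology Y I) ?F"
    using cf by (auto simp: continuous_map_componentwise
        intro!: continuous_map_compose[OF continuous_map_product_projection, unfolded o_def])
  moreover have "continuous_map (product_topology Y I) (product_topology X I) ?G"
    using cg by (auto simp: continuous_map_componentwise
        intro!: continuous_map_compose[OF continuous_map_product_projection, unfolded o_def])
  moreover have "?G (?F x) = x" if "x \<in> topspace (product_topology X I)" for x
    using that fg by (auto simp: homeomorphic_maps_def PiE_iff extensional_def fun_eq_iff)
  moreover have "?F (?G y) = y" if "y \<in> topspace (product_topology Y I)" for y
    using that fg by (auto simp: homeomorphic_maps_def PiE_iff extensional_def fun_eq_iff)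
  ultimately show ?thesis
    unfolding homeomorphic_space_def homeomorphic_maps_def by blast
qed

lemma continuous_map_Max:
  assumes "finite T" "T \<noteq> {}" "\<And>v. v \<in> T \<Longrightarrow> continuous_map X euclideanreal (f v)"
  shows "continuous_map X euclideanreal (\<lambda>x. Max ((\<lambda>v. f v x) ` T))"
  using assms
proof (induction T rule: finite_ne_induct)
  case (insert a S)
  then have "continuous_map X euclideanreal (\<lambda>x. max (f a x) (Max ((\<lambda>v. f v x) ` S)))"
    by (intro continuous_map_real_max) auto
  with insert show ?case by simp
qed simp

lemma continuous_map_restrict_into_powertop_real:
  assumes "\<And>v. v \<in> T \<Longrightarrow> continuous_map X euclideanreal (\<lambda>x. f x v)"
    and "\<And>x. x \<in> topspace X \<Longrightarrow> restrict (f x) T \<in> S"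
  shows "continuous_map X (subtopology (powertop_real T) S) (\<lambda>x. restrict (f x) T)"
  using assms by (auto simp: continuous_map_componentwise intro!: continuous_map_into_subtopology)

definition cube_boundary :: "'v set \<Rightarrow> ('v \<Rightarrow> real) set" where
  "cube_boundary T = {y \<in> PiE T (\<lambda>_. {-1..1}). \<exists>v\<in>T. \<bar>y v\<bar> = 1}"

definition unit_sphere :: "'v set \<Rightarrow> ('v \<Rightarrow> real) set" where
  "unit_sphere T = {y \<in> PiE T (\<lambda>_. UNIV). (\<Sum>v\<in>T. (y v)\<^sup>2) = 1}"

lemma topspace_cube_boundary:
  "topspace (subtopology (powertop_real T) (cube_boundary T)) = cube_boundary T"
  by (auto simp: cube_boundary_def)

lemma topspace_unit_sphere:
  "topspace (subtopology (powertop_real T) (unit_sphere T)) = unit_sphere T"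
  by (auto simp: unit_sphere_def)

lemma nsphere_eq_unit_sphere: "nsphere n = subtopology (powertop_real {..n}) (unit_sphere {..n})"
  by (simp add: nsphere_def unit_sphere_def)

lemma cube_boundary_homeomorphic_unit_sphere:
  assumes T: "finite T" "T \<noteq> {}"
  shows "subtopology (powertop_real T) (cube_boundary T)
           homeomorphic_space subtopology (powertop_real T) (unit_sphere T)"
proof -
  define s where "s x = sqrt (\<Sum>v\<in>T. (x v)\<^sup>2)" for x :: "_ \<Rightarrow> real"
  define m where "m x = Max ((\<lambda>v. \<bar>x v\<bar>) ` T)" for x :: "_ \<Rightarrow> real"
  define F where "F x = restrict (\<lambda>v. x v / s x) T" for x
  define G where "G y = restrict (\<lambda>v. y v / m y) T" for y
  have m_ge: "\<bar>x v\<bar> \<le> m x" if "v \<in> T" for x v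
    unfolding m_def using T that by (intro Max_ge) auto
  have m_attained: "\<exists>v\<in>T. \<bar>x v\<bar> = m x" for x
  proof -
    have "m x \<in> (\<lambda>v. \<bar>x v\<bar>) ` T" unfolding m_def using T by (intro Max_in) auto
    then show ?thesis by auto
  qed
  have s_cube: "s x \<ge> 1" if "x \<in> cube_boundary T" for x
  proof -
    obtain v where v: "v \<in> T" "\<bar>x v\<bar> = 1"
      using \<open>x \<in> cube_boundary T\<close> by (auto simp: cube_boundary_def)
    then have "(x v)\<^sup>2 = 1" by (metis power2_abs one_power2)
    then have "1 \<le> (\<Sum>w\<in>T. (x w)\<^sup>2)"
      using T v member_le_sum[of v T "\<lambda>w. (x w)\<^sup>2"] by simp
    then show ?thesis by (simp add: s_def)
  qed
  have m_sphere: "m y > 0" if "y \<in> unit_sphere T" for y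
  proof (rule ccontr)
    assume "\<not> m y > 0"
    then have "\<forall>v\<in>T. y v = 0" using m_ge[of _ y] by force
    with that show False by (simp add: unit_sphere_def)
  qed
  have F_cube: "F x \<in> unit_sphere T" if "x \<in> cube_boundary T" for x
  proof -
    have "(\<Sum>v\<in>T. (x v / s x)\<^sup>2) = (\<Sum>v\<in>T. (x v)\<^sup>2) / (s x)\<^sup>2"
      by (simp add: power_divide sum_divide_distrib)
    also have "\<dots> = 1"
      using s_cube[OF that] by (simp add: s_def sum_nonneg)
    finally show ?thesis by (simp add: unit_sphere_def F_def)
  qed
  have G_sphere: "G y \<in> cube_boundary T" if "y \<in> unit_sphere T" for y
  proof -
    have "\<bar>y v / m y\<bar> \<le> 1" if "v \<in> T" for v
      using m_ge[OF that, of y] m_sphere[OF \<open>y \<in> unit_sphere T\<close>] by simp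
    then have "G y \<in> PiE T (\<lambda>_. {-1..1})"
      unfolding G_def by (auto simp del: abs_divide simp add: abs_le_iff)
    moreover obtain v where "v \<in> T" "\<bar>y v\<bar> = m y"
      using m_attained by blast
    then have "\<exists>v\<in>T. \<bar>G y v\<bar> = 1"
      using m_sphere[OF that] by (auto simp: G_def intro!: bexI[of _ v])
    ultimately show ?thesis by (simp add: cube_boundary_def)
  qed
  have m_cube: "m x = 1" if "x \<in> cube_boundary T" for x
    unfolding m_def using T that
    by (intro Max_eqI) (auto simp: cube_boundary_def PiE_iff abs_le_iff)
  have GF: "G (F x) = x" if "x \<in> cube_boundary T" for x
  proof -
    have s_pos: "s x > 0" using s_cube[OF that] by simp
    have "m (F x) = Max ((\<lambda>t. t / s x) ` (\<lambda>v. \<bar>x v\<bar>) ` T)"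
      unfolding m_def F_def image_image using s_pos by (intro arg_cong[where f = Max] image_cong) auto
    also have "\<dots> = m x / s x"
      unfolding m_def using T s_pos
      by (intro mono_Max_commute[symmetric]) (auto simp: mono_def divide_right_mono)
    finally have "m (F x) = 1 / s x" using m_cube[OF that] by simp
    then show ?thesis using that s_pos
      by (auto simp: G_def F_def cube_boundary_def PiE_iff extensional_def fun_eq_iff)
  qed
  have FG: "F (G y) = y" if "y \<in> unit_sphere T" for y
  proof -
    have "(\<Sum>v\<in>T. (G y v)\<^sup>2) = (\<Sum>v\<in>T. (y v)\<^sup>2) / (m y)\<^sup>2"
      by (simp add: G_def power_divide sum_divide_distrib)
    then have "s (G y) = 1 / m y"
      using that m_sphere[OF that] by (simp add: s_def unit_sphere_def real_sqrt_divide)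
    then show ?thesis using that m_sphere[OF that]
      by (auto simp: G_def F_def unit_sphere_def PiE_iff extensional_def fun_eq_iff)
  qed
  have "continuous_map (subtopology (powertop_real T) (cube_boundary T))
          (subtopology (powertop_real T) (unit_sphere T)) F"
    unfolding F_def
  proof (rule continuous_map_restrict_into_powertop_real)
    show "continuous_map (subtopology (powertop_real T) (cube_boundary T)) euclideanreal
            (\<lambda>x. x v / s x)" if "v \<in> T" for v
      using that T s_cube[unfolded s_def] unfolding s_def by (intro continuous_intros) fastforce+
    show "restrict (\<lambda>v. x v / s x) T \<in> unit_sphere T"
      if "x \<in> topspace (subtopology (powertop_real T) (cube_boundary T))" for x
      using F_cube that by (simp add: F_def)
  qed
  moreover have "continuous_map (subtopology (powertop_real T) (unit_sphere T))
          (subtopology (powertop_real T) (cube_boundary T)) G"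
    unfolding G_def
  proof (rule continuous_map_restrict_into_powertop_real)
    show "continuous_map (subtopology (powertop_real T) (unit_sphere T)) euclideanreal
            (\<lambda>y. y v / m y)" if "v \<in> T" for v
      using that T m_sphere[unfolded m_def] unfolding m_def
      by (intro continuous_intros continuous_map_Max) fastforce+
    show "restrict (\<lambda>v. y v / m y) T \<in> cube_boundary T"
      if "y \<in> topspace (subtopology (powertop_real T) (unit_sphere T))" for y
      using G_sphere that by (simp add: G_def)
  qed
  ultimately show ?thesis
    unfolding homeomorphic_space_def homeomorphic_maps_def topspace_cube_boundary topspace_unit_sphere
    using GF FG by blast
qed

lemma unit_sphere_reindex_homeomorphic:
  assumes h: "bij_betw h A T"
  shows "subtopology (powertop_real T) (unit_sphere T)
           homeomorphic_space subtopology (powertop_real A) (unit_sphere A)"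
proof -
  define h' where "h' = inv_into A h"
  have h': "bij_betw h' T A"
    unfolding h'_def using h by (rule bij_betw_inv_into)
  have h_h': "\<And>t. t \<in> T \<Longrightarrow> h (h' t) = t" and h'_h: "\<And>a. a \<in> A \<Longrightarrow> h' (h a) = a"
    unfolding h'_def using h by (auto simp: bij_betw_inv_into_right bij_betw_inv_into_left)
  define F where "F x = restrict (\<lambda>a. x (h a)) A" for x :: "_ \<Rightarrow> real"
  define G where "G y = restrict (\<lambda>t. y (h' t)) T" for y :: "_ \<Rightarrow> real"
  have sum_h: "(\<Sum>a\<in>A. (x (h a))\<^sup>2) = (\<Sum>t\<in>T. (x t)\<^sup>2)" for x :: "_ \<Rightarrow> real"
    using sum.reindex_bij_betw[OF h, of "\<lambda>t. (x t)\<^sup>2"] by simp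
  have sum_h': "(\<Sum>t\<in>T. (y (h' t))\<^sup>2) = (\<Sum>a\<in>A. (y a)\<^sup>2)" for y :: "_ \<Rightarrow> real"
    using sum.reindex_bij_betw[OF h', of "\<lambda>a. (y a)\<^sup>2"] by simp
  have "continuous_map (subtopology (powertop_real T) (unit_sphere T))
          (subtopology (powertop_real A) (unit_sphere A)) F"
    unfolding F_def
  proof (rule continuous_map_restrict_into_powertop_real)
    show "continuous_map (subtopology (powertop_real T) (unit_sphere T)) euclideanreal
            (\<lambda>x. x (h a))" if "a \<in> A" for a
      using that h by (intro continuous_intros) (auto simp: bij_betw_def)
    show "restrict (\<lambda>a. x (h a)) A \<in> unit_sphere A"
      if "x \<in> topspace (subtopology (powertop_real T) (unit_sphere T))" for x
      using that sum_h by (simp add: unit_sphere_def)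
  qed
  moreover have "continuous_map (subtopology (powertop_real A) (unit_sphere A))
          (subtopology (powertop_real T) (unit_sphere T)) G"
    unfolding G_def
  proof (rule continuous_map_restrict_into_powertop_real)
    show "continuous_map (subtopology (powertop_real A) (unit_sphere A)) euclideanreal
            (\<lambda>y. y (h' t))" if "t \<in> T" for t
      using that h' by (intro continuous_intros) (auto simp: bij_betw_def)
    show "restrict (\<lambda>t. y (h' t)) T \<in> unit_sphere T"
      if "y \<in> topspace (subtopology (powertop_real A) (unit_sphere A))" for y
      using that sum_h' by (simp add: unit_sphere_def)
  qed
  moreover have "G (F x) = x" if "x \<in> unit_sphere T" for x
    using that bij_betwE[OF h'] h_h' by (auto simp: unit_sphere_def G_def F_def PiE_iff extensional_def fun_eq_iff)
  moreover have "F (G y) = y" if "y \<in> unit_sphere A" for y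
    using that bij_betwE[OF h] h'_h by (auto simp: unit_sphere_def G_def F_def PiE_iff extensional_def fun_eq_iff)
  ultimately show ?thesis
    unfolding homeomorphic_space_def homeomorphic_maps_def topspace_unit_sphere by blast
qed

lemma cube_boundary_homeomorphic_nsphere:
  assumes "card T = Suc n"
  shows "subtopology (powertop_real T) (cube_boundary T) homeomorphic_space nsphere n"
proof -
  have "finite T" "T \<noteq> {}"
    using assms by (auto intro: card_ge_0_finite)
  obtain h where h: "bij_betw h {..n} T"
    using assms \<open>finite T\<close> by (metis card_atMost finite_atMost finite_same_card_bij)
  have "subtopology (powertop_real T) (cube_boundary T)
          homeomorphic_space subtopology (powertop_real T) (unit_sphere T)"
    using \<open>finite T\<close> \<open>T \<noteq> {}\<close> by (rule cube_boundary_homeomorphic_unit_sphere)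
  also have "\<dots> homeomorphic_space nsphere n"
    unfolding nsphere_eq_unit_sphere by (rule unit_sphere_reindex_homeomorphic[OF h])
  finally show ?thesis .
qed

definition avoiding_complex :: "'v set \<Rightarrow> ('i \<Rightarrow> 'v set) \<Rightarrow> 'i set \<Rightarrow> 'v set set" where
  "avoiding_complex V T I = {\<sigma>. \<sigma> \<subseteq> V \<and> (\<forall>i\<in>I. \<not> T i \<subseteq> \<sigma>)}"

lemma RZ_set_avoiding_complex:
  assumes "\<And>i. i \<in> I \<Longrightarrow> T i \<subseteq> V"
  shows "RZ_set (avoiding_complex V T I) V
           = {x \<in> PiE V (\<lambda>_. {-1..1}). \<forall>i\<in>I. \<exists>v\<in>T i. \<bar>x v\<bar> = 1}"
proof (intro set_eqI iffI)
  fix x assume "x \<in> RZ_set (avoiding_complex V T I) V"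
  then obtain \<sigma> where \<sigma>: "\<forall>i\<in>I. \<not> T i \<subseteq> \<sigma>"
    and x: "x \<in> PiE V (\<lambda>v. if v \<in> \<sigma> then {-1..1} else {-1, 1})"
    unfolding RZ_set_def avoiding_complex_def by blast
  have "x \<in> PiE V (\<lambda>_. {-1..1})"
    using x by (auto simp: PiE_iff split: if_splits)
  moreover have "\<exists>v\<in>T i. \<bar>x v\<bar> = 1" if i: "i \<in> I" for i
  proof -
    obtain v where "v \<in> T i" "v \<notin> \<sigma>" using \<sigma> i by blast
    with x assms[OF i] show ?thesis by (force simp: PiE_iff)
  qed
  ultimately show "x \<in> {x \<in> PiE V (\<lambda>_. {-1..1}). \<forall>i\<in>I. \<exists>v\<in>T i. \<bar>x v\<bar> = 1}"
    by blast
next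
  fix x :: "_ \<Rightarrow> real" assume x: "x \<in> {x \<in> PiE V (\<lambda>_. {-1..1}). \<forall>i\<in>I. \<exists>v\<in>T i. \<bar>x v\<bar> = 1}"
  define \<sigma> where "\<sigma> = {v \<in> V. \<bar>x v\<bar> \<noteq> 1}"
  have "\<sigma> \<in> avoiding_complex V T I"
    using x by (auto simp: \<sigma>_def avoiding_complex_def)
  moreover have "x \<in> PiE V (\<lambda>v. if v \<in> \<sigma> then {-1..1} else {-1, 1})"
    using x by (auto simp: \<sigma>_def PiE_iff abs_if split: if_splits)
  ultimately show "x \<in> RZ_set (avoiding_complex V T I) V"
    unfolding RZ_set_def by blast
qed

lemma full_sub_avoiding_complex:
  assumes "U \<subseteq> V"
  shows "full_sub (avoiding_complex V T I) U = avoiding_complex U T {i \<in> I. T i \<subseteq> U}"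
  using assms by (auto simp: full_sub_def avoiding_complex_def) (meson order_trans)

lemma homeomorphic_product_cube_boundaries:
  assumes disj: "disjoint_family_on T I"
  defines "V \<equiv> \<Union>i\<in>I. T i"
  shows "subtopology (powertop_real V) {x \<in> PiE V (\<lambda>_. {-1..1}). \<forall>i\<in>I. \<exists>v\<in>T i. \<bar>x v\<bar> = 1}
           homeomorphic_space
         product_topology (\<lambda>i. subtopology (powertop_real (T i)) (cube_boundary (T i))) I"
    (is "subtopology _ ?R homeomorphic_space ?P")
proof -
  define idx where "idx v = (THE i. i \<in> I \<and> v \<in> T i)" for v
  have idx_eq: "idx v = i" if "i \<in> I" "v \<in> T i" for i v
    unfolding idx_def using that disj by (intro the_equality) (auto simp: disjoint_family_on_def)
  have idx: "idx v \<in> I" "v \<in> T (idx v)" if "v \<in> V" for v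
    using that idx_eq by (auto simp: V_def)
  have top_R: "topspace (subtopology (powertop_real V) ?R) = ?R"
    by (auto simp: PiE_iff extensional_def)
  have top_P: "topspace ?P = PiE I (\<lambda>i. cube_boundary (T i))"
    by (simp only: topspace_product_topology topspace_cube_boundary)
  define F where "F x = restrict (\<lambda>i. restrict x (T i)) I" for x :: "_ \<Rightarrow> real"
  define G where "G z = restrict (\<lambda>v. z (idx v) v) V" for z :: "_ \<Rightarrow> _ \<Rightarrow> real"
  have "continuous_map (subtopology (powertop_real V) ?R) ?P F"
    unfolding F_def continuous_map_componentwise
  proof (intro conjI ballI)
    fix i assume i: "i \<in> I"
    have "continuous_map (subtopology (powertop_real V) ?R)
            (subtopology (powertop_real (T i)) (cube_boundary (T i))) (\<lambda>x. restrict x (T i))"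
    proof (rule continuous_map_restrict_into_powertop_real)
      show "continuous_map (subtopology (powertop_real V) ?R) euclideanreal (\<lambda>x. x v)"
        if "v \<in> T i" for v
        using i that by (intro continuous_intros) (auto simp: V_def)
      show "restrict x (T i) \<in> cube_boundary (T i)"
        if "x \<in> topspace (subtopology (powertop_real V) ?R)" for x
        using i that by (fastforce simp: cube_boundary_def V_def PiE_iff)
    qed
    with i show "continuous_map (subtopology (powertop_real V) ?R)
        (subtopology (powertop_real (T i)) (cube_boundary (T i)))
        (\<lambda>x. restrict (\<lambda>i. restrict x (T i)) I i)"
      by simp
  qed auto
  moreover have "continuous_map ?P (subtopology (powertop_real V) ?R) G"
    unfolding G_def
  proof (rule continuous_map_restrict_into_powertop_real)
    fix v assume v: "v \<in> V"
    have proj: "continuous_map ?P (subtopology (powertop_real (T (idx v))) (cube_boundary (T (idx v))))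
            (\<lambda>z. z (idx v))"
      using idx[OF v] by (intro continuous_map_product_projection)
    have eval: "continuous_map (subtopology (powertop_real (T (idx v))) (cube_boundary (T (idx v))))
            euclideanreal (\<lambda>y. y v)"
      using idx[OF v] by (intro continuous_intros) auto
    show "continuous_map ?P euclideanreal (\<lambda>z. z (idx v) v)"
      using continuous_map_compose[OF proj eval] by (simp add: o_def)
  next
    fix z assume "z \<in> topspace ?P"
    then have z: "z \<in> PiE I (\<lambda>i. cube_boundary (T i))"
      unfolding top_P .
    have "z (idx v) v \<in> {-1..1}" if "v \<in> V" for v
      using z idx[OF that] by (auto simp: PiE_iff cube_boundary_def)
    moreover have "\<exists>v\<in>T i. \<bar>restrict (\<lambda>v. z (idx v) v) V v\<bar> = 1" if i: "i \<in> I" for i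
      using z i idx_eq[OF i] by (fastforce simp: V_def PiE_iff cube_boundary_def)
    ultimately show "restrict (\<lambda>v. z (idx v) v) V \<in> ?R"
      by (auto simp: V_def)
  qed
  moreover have "G (F x) = x" if "x \<in> ?R" for x
    using that idx by (auto simp: G_def F_def PiE_iff extensional_def fun_eq_iff)
  moreover have "F (G z) = z" if "z \<in> PiE I (\<lambda>i. cube_boundary (T i))" for z
    using that idx_eq by (auto simp: G_def F_def V_def PiE_iff cube_boundary_def extensional_def fun_eq_iff)
  ultimately show ?thesis
    unfolding homeomorphic_space_def homeomorphic_maps_def top_R top_P by blast
qed

lemma RZ_avoiding_complex_homeomorphic_spheres:
  assumes "disjoint_family_on T I" and "\<And>i. i \<in> I \<Longrightarrow> card (T i) = Suc (n i)"
  shows "RZ (avoiding_complex (\<Union>i\<in>I. T i) T I) (\<Union>i\<in>I. T i)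
           homeomorphic_space product_topology (\<lambda>i. nsphere (n i)) I"
proof -
  have "RZ (avoiding_complex (\<Union>i\<in>I. T i) T I) (\<Union>i\<in>I. T i)
          = subtopology (powertop_real (\<Union>i\<in>I. T i))
              {x \<in> PiE (\<Union>i\<in>I. T i) (\<lambda>_. {-1..1}). \<forall>i\<in>I. \<exists>v\<in>T i. \<bar>x v\<bar> = 1}"
    unfolding RZ_def by (subst RZ_set_avoiding_complex) auto
  also have "\<dots> homeomorphic_space
      product_topology (\<lambda>i. subtopology (powertop_real (T i)) (cube_boundary (T i))) I"
    by (rule homeomorphic_product_cube_boundaries[OF assms(1)])
  also have "\<dots> homeomorphic_space product_topology (\<lambda>i. nsphere (n i)) I"
    using assms(2) by (intro homeomorphic_space_product_topology cube_boundary_homeomorphic_nsphere)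
  finally show ?thesis .
qed

lemma disjoint_family_on_first_occurrences:
  fixes N :: "nat \<Rightarrow> 'a set"
  shows "disjoint_family_on (\<lambda>i. N i - (\<Union>j\<in>{1..<i}. N j)) {1..}"
  unfolding disjoint_family_on_def
proof (intro ballI impI)
  fix i j :: nat assume "i \<in> {1..}" "j \<in> {1..}" "i \<noteq> j"
  then have "i \<in> {1..<j} \<or> j \<in> {1..<i}" by auto
  then show "(N i - (\<Union>k\<in>{1..<i}. N k)) \<inter> (N j - (\<Union>k\<in>{1..<j}. N k)) = {}"
    by blast
qed

lemma UN_first_occurrences:
  fixes N :: "nat \<Rightarrow> 'a set"
  shows "(\<Union>i\<in>{1..r}. N i - (\<Union>j\<in>{1..<i}. N j)) = (\<Union>i\<in>{1..r}. N i)"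
proof (induction r)
  case (Suc r)
  have "{1..Suc r} = insert (Suc r) {1..r}" and "{1..<Suc r} = {1..r}"
    by auto
  with Suc show ?case by auto
qed simp

lemma disjoint_family_on_tilde: "disjoint_family_on N I \<Longrightarrow> disjoint_family_on (tilde N) I"
  by (auto simp: disjoint_family_on_def tilde_def)

lemma card_tilde: "finite (N i) \<Longrightarrow> card (tilde N i) = Suc (card (N i))"
  by (simp add: tilde_def card_image card_insert_disjoint image_iff inj_on_def)

lemma UN_tilde: "(\<Union>i\<in>I. tilde N i) = Inl ` (\<Union>i\<in>I. N i) \<union> Inr ` I"
  by (auto simp: tilde_def)

lemma tilde_subset_UN_tilde_iff: "tilde N i \<subseteq> (\<Union>j\<in>J. tilde N j) \<longleftrightarrow> i \<in> J"
  by (auto simp: tilde_def)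

lemma KN_eq_avoiding_complex: "KN W r N = avoiding_complex (KVerts W r) (tilde N) {1..r}"
  by (simp add: KN_def avoiding_complex_def)

theorem proposition4p4:
  fixes W :: "'a set" and r :: nat and N :: "nat \<Rightarrow> 'a set"
  assumes "finite W"
    and "\<forall>i\<in>{1..r}. N i \<subseteq> W"
    and "(\<Union>i\<in>{1..r}. N i) = W"
  defines "M \<equiv> (\<lambda>i. N i - (\<Union>j\<in>{1..<i}. N j))"
  defines "U \<equiv> (\<Union>i\<in>{2..r}. tilde M i)"
  shows "(RZ (KN W r M) (KVerts W r) homeomorphic_space
           product_topology (\<lambda>i. nsphere (card (M i))) {1..r}) \<and>
         (RZ (full_sub (KN W r M) U) U homeomorphic_space
           product_topology (\<lambda>i. nsphere (card (M i))) {2..r})"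
proof -
  have "disjoint_family_on M {1..}"
    unfolding M_def by (rule disjoint_family_on_first_occurrences)
  then have disj: "disjoint_family_on (tilde M) I" if "I \<subseteq> {1..r}" for I
    using that by (intro disjoint_family_on_tilde disjoint_family_on_mono[of I "{1..}"]) auto
  have fin_M: "finite (M i)" if "i \<in> {1..r}" for i
    using that assms(1,2) unfolding M_def by (meson Diff_subset finite_subset subset_trans)
  have card: "card (tilde M i) = Suc (card (M i))" if "i \<in> {1..r}" for i
    using fin_M[OF that] by (rule card_tilde)
  have verts: "KVerts W r = (\<Union>i\<in>{1..r}. tilde M i)"
    unfolding KVerts_def UN_tilde M_def UN_first_occurrences assms(3) ..
  have "full_sub (KN W r M) U = avoiding_complex U (tilde M) {i \<in> {1..r}. tilde M i \<subseteq> U}"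
    unfolding KN_eq_avoiding_complex verts U_def
    by (intro full_sub_avoiding_complex UN_mono) auto
  also have "{i \<in> {1..r}. tilde M i \<subseteq> U} = {2..r}"
    unfolding U_def tilde_subset_UN_tilde_iff by auto
  finally have faces_U: "full_sub (KN W r M) U = avoiding_complex U (tilde M) {2..r}" .
  have "RZ (KN W r M) (KVerts W r) homeomorphic_space
          product_topology (\<lambda>i. nsphere (card (M i))) {1..r}"
    unfolding KN_eq_avoiding_complex verts
    using card disj by (intro RZ_avoiding_complex_homeomorphic_spheres) auto
  moreover have "RZ (full_sub (KN W r M) U) U homeomorphic_space
          product_topology (\<lambda>i. nsphere (card (M i))) {2..r}"
    unfolding faces_U unfolding U_def
    using card disj by (intro RZ_avoiding_complex_homeomorphic_spheres) auto
  ultimately show ?thesis ..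
qed

end
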